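(* Let $\varepsilon>0$, $r\ge2$ an integer and $a>0$ be constants, and let $p=d/\binom{n-1}{r-1}$. Fix $S\subseteq[n]$ with $|S|\le a\left(\frac{\log d}{d}\right)^{1/(r-1)}n$. If $d$ is sufficiently large in terms of $\varepsilon,r,a$, then with probability $1-\exp(-\Omega(n))$ there is no independent set $T$ of $\mathcal{H}_r(n,p)$ with $|T\cap S|\ge\varepsilon\left(\frac{\log d}{d}\right)^{1/(r-1)}n$.
   Context: $\mathcal{H}_r(n,p)$: random $r$-uniform hypergraph on $[n]$, each $r$-subset an edge independently with probability $p$. An independent set is a vertex set containing no edge. *)

theory Defs
  imports Complex_Main
begin

text \<open>Vertex set [n] is rendered as {..<n}. The possible edges of an r-uniform
hypergraph on [n] are the r-subsets of [n].\<close>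

definition rsubsets :: "nat \<Rightarrow> nat \<Rightarrow> nat set set" where
  "rsubsets n r = {e. e \<subseteq> {..<n} \<and> card e = r}"

definition indep_set :: "nat \<Rightarrow> nat set set \<Rightarrow> nat set \<Rightarrow> bool" where
  "indep_set n G T \<longleftrightarrow> T \<subseteq> {..<n} \<and> (\<forall>e\<in>G. \<not> e \<subseteq> T)"

text \<open>Probability of a property of the random hypergraph H_r(n,p): each r-subset is an
edge independently with probability p, so an edge set G has probability
p^|G| (1-p)^(N-|G|) with N the number of r-subsets.\<close>
definition hprob :: "nat \<Rightarrow> nat \<Rightarrow> real \<Rightarrow> (nat set set \<Rightarrow> bool) \<Rightarrow> real" where
  "hprob n r p P =
     (\<Sum>G\<in>Pow (rsubsets n r).
        if P G then p ^ card G * (1 - p) ^ (card (rsubsets n r) - card G) else 0)"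

end

theory Submission imports Defs begin

text \<open>A union bound over subsets of S. Let L = (ln d / d) powr (1/(r-1)) and
k = \<lceil>\<epsilon> L n\<rceil>. An independent set meeting S in at least k vertices contains a k-subset
of S spanning no edge. There are at most 2^|S| \<le> 2^(a L n) such subsets, and each spans no
edge with probability (1 - p)^(k choose r) \<le> exp (- p (k/r)^r). Since p \<ge> d / n^(r-1) and
d L^r = L ln d, the last exponent is at least \<epsilon>^r L n ln d / r^r, which exceeds 2 a L n ln 2
as soon as ln d \<ge> 2 a r^r ln 2 / \<epsilon>^r.\<close>

lemma sum_Pow_card_power:
  fixes p q :: "'a::comm_semiring_1"
  assumes "finite B"
  shows "(\<Sum>G\<in>Pow B. p ^ card G * q ^ (card B - card G)) = (p + q) ^ card B"
proof -
  have "(p + q) ^ card B = (\<Sum>X\<in>Pow B. (\<Prod>x\<in>X. p) * (\<Prod>x\<in>B - X. q))"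
    using prod_add[OF assms, of "\<lambda>_. p" "\<lambda>_. q"] by simp
  also have "\<dots> = (\<Sum>G\<in>Pow B. p ^ card G * q ^ (card B - card G))"
    using assms by (intro sum.cong) (auto simp: card_Diff_subset finite_subset)
  finally show ?thesis by simp
qed

lemma finite_rsubsets: "finite (rsubsets n r)"
  unfolding rsubsets_def by (rule finite_subset[of _ "Pow {..<n}"]) auto

lemma hprob_mono:
  assumes "0 \<le> p" "p \<le> 1" "\<And>G. P G \<Longrightarrow> Q G"
  shows "hprob n r p P \<le> hprob n r p Q"
  unfolding hprob_def using assms by (intro sum_mono) auto

lemma hprob_union_bound:
  assumes "0 \<le> p" "p \<le> 1" "finite F" "\<And>G. P G \<Longrightarrow> \<exists>U\<in>F. Q U G"
  shows "hprob n r p P \<le> (\<Sum>U\<in>F. hprob n r p (Q U))"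
proof -
  define R where "R = rsubsets n r"
  define w :: "nat set set \<Rightarrow> real" where "w G = p ^ card G * (1 - p) ^ (card R - card G)" for G
  have w_nonneg: "w G \<ge> 0" for G
    using assms unfolding w_def by simp
  have "hprob n r p P = (\<Sum>G\<in>Pow R. if P G then w G else 0)"
    unfolding hprob_def R_def w_def by simp
  also have "\<dots> \<le> (\<Sum>G\<in>Pow R. \<Sum>U\<in>F. if Q U G then w G else 0)"
  proof (intro sum_mono)
    fix G
    show "(if P G then w G else 0) \<le> (\<Sum>U\<in>F. if Q U G then w G else 0)"
    proof (cases "P G")
      case True
      then obtain U where "U \<in> F" "Q U G"
        using assms(4) by blast
      then have "(if Q U G then w G else 0) \<le> (\<Sum>U\<in>F. if Q U G then w G else 0)"
        using assms(3) w_nonneg by (intro member_le_sum) auto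
      with True \<open>Q U G\<close> show ?thesis by simp
    qed (simp add: sum_nonneg w_nonneg)
  qed
  also have "\<dots> = (\<Sum>U\<in>F. hprob n r p (Q U))"
    unfolding hprob_def R_def w_def by (rule sum.swap)
  finally show ?thesis .
qed

lemma hprob_spans_no_edge:
  assumes "U \<subseteq> {..<n}"
  shows "hprob n r p (\<lambda>G. \<forall>e\<in>G. \<not> e \<subseteq> U) = (1 - p) ^ (card U choose r)"
proof -
  define R where "R = rsubsets n r"
  define A where "A = {e\<in>R. e \<subseteq> U}"
  have "finite R"
    unfolding R_def by (rule finite_rsubsets)
  moreover have "A \<subseteq> R"
    unfolding A_def by auto
  ultimately have "finite A" and card_R: "card R = card A + card (R - A)"
    by (simp_all add: finite_subset card_Diff_subset card_mono)
  have card_A: "card A = card U choose r"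
  proof -
    have "A = {e. e \<subseteq> U \<and> card e = r}"
      unfolding A_def R_def rsubsets_def using assms by auto
    then show ?thesis
      using assms by (simp add: n_subsets finite_subset)
  qed
  have "hprob n r p (\<lambda>G. \<forall>e\<in>G. \<not> e \<subseteq> U)
      = (\<Sum>G\<in>{G\<in>Pow R. \<forall>e\<in>G. \<not> e \<subseteq> U}. p ^ card G * (1 - p) ^ (card R - card G))"
    unfolding hprob_def R_def[symmetric] by (rule sum.inter_filter[symmetric]) (simp add: \<open>finite R\<close>)
  also have "{G\<in>Pow R. \<forall>e\<in>G. \<not> e \<subseteq> U} = Pow (R - A)"
    unfolding A_def by auto
  also have "(\<Sum>G\<in>Pow (R - A). p ^ card G * (1 - p) ^ (card R - card G))
      = (\<Sum>G\<in>Pow (R - A). (1 - p) ^ card A * (p ^ card G * (1 - p) ^ (card (R - A) - card G)))"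
  proof (rule sum.cong)
    fix G assume "G \<in> Pow (R - A)"
    then have "card G \<le> card (R - A)"
      using \<open>finite R\<close> by (simp add: card_mono)
    then have "card R - card G = card A + (card (R - A) - card G)"
      using card_R by simp
    then show "p ^ card G * (1 - p) ^ (card R - card G)
        = (1 - p) ^ card A * (p ^ card G * (1 - p) ^ (card (R - A) - card G))"
      by (simp add: power_add)
  qed simp
  also have "\<dots> = (1 - p) ^ card A"
    by (simp add: sum_distrib_left[symmetric] sum_Pow_card_power \<open>finite R\<close>)
  finally show ?thesis
    using card_A by simp
qed

lemma hprob_indep_trace_ge_le_binomial:
  assumes "S \<subseteq> {..<n}" "0 \<le> p" "p \<le> 1"
  shows "hprob n r p (\<lambda>G. \<exists>T. indep_set n G T \<and> k \<le> card (T \<inter> S))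
    \<le> real (card S choose k) * (1 - p) ^ (k choose r)"
proof -
  define F where "F = {U. U \<subseteq> S \<and> card U = k}"
  have "finite S"
    using assms(1) finite_subset by blast
  then have "finite F"
    unfolding F_def by (simp add: finite_subset[of _ "Pow S"] subset_eq)
  have card_F: "card F = card S choose k"
    unfolding F_def using n_subsets[OF \<open>finite S\<close>] .
  have "hprob n r p (\<lambda>G. \<exists>T. indep_set n G T \<and> k \<le> card (T \<inter> S))
      \<le> (\<Sum>U\<in>F. hprob n r p (\<lambda>G. \<forall>e\<in>G. \<not> e \<subseteq> U))"
  proof (rule hprob_union_bound[OF assms(2,3) \<open>finite F\<close>])
    fix G assume "\<exists>T. indep_set n G T \<and> k \<le> card (T \<inter> S)"
    then obtain T where T: "indep_set n G T" "k \<le> card (T \<inter> S)"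
      by blast
    then obtain U where U: "U \<subseteq> T \<inter> S" "card U = k"
      by (meson obtain_subset_with_card_n)
    then have "U \<in> F"
      unfolding F_def by blast
    moreover have "\<forall>e\<in>G. \<not> e \<subseteq> U"
      using T(1) U(1) unfolding indep_set_def by blast
    ultimately show "\<exists>U\<in>F. \<forall>e\<in>G. \<not> e \<subseteq> U" ..
  qed
  also have "\<dots> = (\<Sum>U\<in>F. (1 - p) ^ (k choose r))"
  proof (rule sum.cong)
    fix U assume "U \<in> F"
    then have "U \<subseteq> {..<n}" "card U = k"
      using assms(1) unfolding F_def by auto
    then show "hprob n r p (\<lambda>G. \<forall>e\<in>G. \<not> e \<subseteq> U) = (1 - p) ^ (k choose r)"
      using hprob_spans_no_edge[of U n r p] by simp
  qed simp
  finally show ?thesis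
    using card_F by simp
qed

lemma one_minus_power_le_exp:
  fixes p :: real
  assumes "p \<le> 1"
  shows "(1 - p) ^ m \<le> exp (- (p * real m))"
proof -
  have "(1 - p) ^ m \<le> exp (- p) ^ m"
    using assms exp_ge_add_one_self[of "- p"] by (intro power_mono) simp_all
  then show ?thesis
    by (simp add: exp_of_nat_mult[symmetric] mult.commute)
qed

lemma binomial_ge_pred_quotient:
  assumes "2 \<le> r" "1 \<le> d" "(real r - 1) * d \<le> real n - 1"
  shows "d \<le> real ((n - 1) choose (r - 1))"
proof -
  have "real r - 1 \<le> (real r - 1) * d"
    using assms(1,2) by simp
  with assms have "r - 1 \<le> n - 1" and "0 < r - 1"
    by linarith+
  have "d \<le> real (n - 1) / real (r - 1)"
    using assms \<open>0 < r - 1\<close> \<open>r - 1 \<le> n - 1\<close> by (simp add: of_nat_diff field_simps)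
  also have "\<dots> \<le> (real (n - 1) / real (r - 1)) ^ (r - 1)"
    using \<open>0 < r - 1\<close> \<open>r - 1 \<le> n - 1\<close> by (intro self_le_power) simp_all
  also have "\<dots> \<le> real ((n - 1) choose (r - 1))"
    using binomial_ge_n_over_k_pow_k[OF \<open>r - 1 \<le> n - 1\<close>] by simp
  finally show ?thesis .
qed

lemma powr_inverse_pred_power:
  fixes y :: real
  assumes "0 < y" "2 \<le> r"
  shows "(y powr (1 / (real r - 1))) ^ r = y * y powr (1 / (real r - 1))"
proof -
  define L where "L = y powr (1 / (real r - 1))"
  have "L ^ (r - 1) = y powr (1 / (real r - 1) * real (r - 1))"
    unfolding L_def using assms by (simp add: powr_realpow[symmetric] powr_powr)
  also have "\<dots> = y"
    using assms by (simp add: of_nat_diff)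
  finally have "L ^ (r - 1) = y" .
  moreover have "L ^ r = L ^ (r - 1) * L"
    using assms by (simp add: power_eq_if)
  ultimately show ?thesis
    unfolding L_def by simp
qed

lemma hprob_indep_trace_ge_le_exp:
  fixes A x d :: real
  assumes S: "S \<subseteq> {..<n}" "real (card S) \<le> A * real n"
    and "0 < x" "1 \<le> r" "real r \<le> x * real n"
    and d: "0 < d" "d \<le> real ((n - 1) choose (r - 1))"
  shows "hprob n r (d / real ((n - 1) choose (r - 1)))
      (\<lambda>G. \<exists>T. indep_set n G T \<and> x * real n \<le> real (card (T \<inter> S)))
    \<le> exp ((A * ln 2 - d * x ^ r / real r ^ r) * real n)"
proof -
  define p where "p = d / real ((n - 1) choose (r - 1))"
  define k where "k = nat \<lceil>x * real n\<rceil>"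
  have "0 < x * real n"
    using assms by linarith
  then have "0 < real n"
    using \<open>0 < x\<close> by (simp add: zero_less_mult_iff)
  have binomial_pos: "0 < real ((n - 1) choose (r - 1))"
    using d by linarith
  have "0 \<le> p" "p \<le> 1"
    unfolding p_def using d binomial_pos by simp_all
  have "x * real n \<le> real k" and "r \<le> k"
    unfolding k_def using assms by linarith+
  have p_ge: "d / real n ^ (r - 1) \<le> p"
  proof -
    have "(n - 1) choose (r - 1) \<le> n ^ (r - 1)"
      using binomial_le_pow[of "r - 1" "n - 1"] power_mono[of "n - 1" n "r - 1"]
      by (metis binomial_eq_0_iff diff_le_self dual_order.trans le_refl not_le zero_le)
    then have "real ((n - 1) choose (r - 1)) \<le> real n ^ (r - 1)"
      by (metis of_nat_le_iff of_nat_power)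
    then show ?thesis
      unfolding p_def using d binomial_pos \<open>0 < real n\<close> by (intro divide_left_mono mult_pos_pos) simp_all
  qed
  have "hprob n r p (\<lambda>G. \<exists>T. indep_set n G T \<and> x * real n \<le> real (card (T \<inter> S)))
      \<le> hprob n r p (\<lambda>G. \<exists>T. indep_set n G T \<and> k \<le> card (T \<inter> S))"
    using \<open>0 \<le> p\<close> \<open>p \<le> 1\<close> by (rule hprob_mono) (auto simp: k_def)
  also have "\<dots> \<le> real (card S choose k) * (1 - p) ^ (k choose r)"
    using S(1) \<open>0 \<le> p\<close> \<open>p \<le> 1\<close> by (rule hprob_indep_trace_ge_le_binomial)
  also have "\<dots> \<le> exp (A * ln 2 * real n) * exp (- (p * real (k choose r)))"
  proof (intro mult_mono)
    have "real (card S choose k) \<le> 2 ^ card S"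
      by (metis binomial_le_pow2 numeral_power_eq_of_nat_cancel_iff of_nat_le_iff)
    also have "\<dots> = exp (real (card S) * ln 2)"
      by (simp add: exp_of_nat_mult)
    also have "\<dots> \<le> exp (A * ln 2 * real n)"
      using S(2) by (simp add: mult.commute mult.left_commute)
    finally show "real (card S choose k) \<le> exp (A * ln 2 * real n)" .
  qed (use \<open>p \<le> 1\<close> one_minus_power_le_exp in auto)
  also have "\<dots> \<le> exp ((A * ln 2 - d * x ^ r / real r ^ r) * real n)"
  proof -
    have "d * x ^ r / real r ^ r * real n = d / real n ^ (r - 1) * (x * real n / real r) ^ r"
      using \<open>0 < real n\<close> \<open>1 \<le> r\<close>
      by (simp add: power_mult_distrib power_divide power_diff field_simps)
    also have "\<dots> \<le> p * (real k / real r) ^ r"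
      using p_ge \<open>x * real n \<le> real k\<close> \<open>0 \<le> p\<close> assms
      by (intro mult_mono power_mono divide_right_mono) simp_all
    also have "\<dots> \<le> p * real (k choose r)"
      using \<open>0 \<le> p\<close> binomial_ge_n_over_k_pow_k[OF \<open>r \<le> k\<close>] by (intro mult_left_mono) simp_all
    finally show ?thesis
      by (simp add: exp_add[symmetric] left_diff_distrib)
  qed
  finally show ?thesis
    unfolding p_def .
qed

lemma first_moment_exponent_le:
  fixes \<epsilon> a d :: real
  assumes "0 < \<epsilon>" "2 \<le> r" "1 < d" "2 * a * ln 2 * real r ^ r / \<epsilon> ^ r \<le> ln d"
  defines "L \<equiv> (ln d / d) powr (1 / (real r - 1))"
  shows "a * L * ln 2 - d * (\<epsilon> * L) ^ r / real r ^ r \<le> - (a * ln 2 * L)"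
proof -
  have "0 < ln d / d"
    using assms(3) by simp
  then have "0 < L" and L_power: "d * L ^ r = ln d * L"
    unfolding L_def using assms(2,3) by (simp_all add: powr_inverse_pred_power)
  have "d * (\<epsilon> * L) ^ r / real r ^ r = \<epsilon> ^ r * (d * L ^ r) / real r ^ r"
    by (simp add: power_mult_distrib)
  also have "\<dots> = \<epsilon> ^ r * ln d / real r ^ r * L"
    using L_power by simp
  finally have exponent: "d * (\<epsilon> * L) ^ r / real r ^ r = \<epsilon> ^ r * ln d / real r ^ r * L" .
  have "2 * a * ln 2 \<le> \<epsilon> ^ r * ln d / real r ^ r"
    using assms(1,2,4) by (simp add: field_simps)
  then have "2 * a * ln 2 * L \<le> \<epsilon> ^ r * ln d / real r ^ r * L"
    using \<open>0 < L\<close> by (intro mult_right_mono) simp_all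
  then show ?thesis
    unfolding exponent by (simp add: algebra_simps)
qed

lemma hprob_indep_trace_ge_exponentially_small:
  fixes \<epsilon> a d :: real
  assumes "0 < \<epsilon>" "2 \<le> r" "0 < a"
    and "1 < d" and ln_d: "2 * a * ln 2 * real r ^ r / \<epsilon> ^ r \<le> ln d"
  shows "\<exists>c>0. \<exists>N::nat. \<forall>n\<ge>N. \<forall>S::nat set.
      S \<subseteq> {..<n} \<and> real (card S) \<le> a * (ln d / d) powr (1 / (real r - 1)) * real n \<longrightarrow>
      hprob n r (d / real ((n - 1) choose (r - 1)))
        (\<lambda>G. \<exists>T. indep_set n G T \<and>
           real (card (T \<inter> S)) \<ge> \<epsilon> * (ln d / d) powr (1 / (real r - 1)) * real n)
      \<le> exp (- c * real n)"
proof -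
  define L where "L = (ln d / d) powr (1 / (real r - 1))"
  have "0 < L"
    unfolding L_def using \<open>1 < d\<close> by simp
  define N where "N = nat \<lceil>max (real r / (\<epsilon> * L)) ((real r - 1) * d + 1)\<rceil>"
  have "\<forall>n\<ge>N. \<forall>S::nat set.
      S \<subseteq> {..<n} \<and> real (card S) \<le> a * L * real n \<longrightarrow>
      hprob n r (d / real ((n - 1) choose (r - 1)))
        (\<lambda>G. \<exists>T. indep_set n G T \<and> real (card (T \<inter> S)) \<ge> \<epsilon> * L * real n)
      \<le> exp (- (a * ln 2 * L) * real n)"
  proof (intro allI impI)
    fix n S
    assume "N \<le> n" and S: "S \<subseteq> {..<n} \<and> real (card S) \<le> a * L * real n"
    then have "real r \<le> \<epsilon> * L * real n" and "(real r - 1) * d \<le> real n - 1"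
      using assms \<open>0 < L\<close> unfolding N_def by (auto simp: field_simps)
    then have "hprob n r (d / real ((n - 1) choose (r - 1)))
        (\<lambda>G. \<exists>T. indep_set n G T \<and> \<epsilon> * L * real n \<le> real (card (T \<inter> S)))
      \<le> exp ((a * L * ln 2 - d * (\<epsilon> * L) ^ r / real r ^ r) * real n)"
      using S assms \<open>0 < L\<close> \<open>1 < d\<close> binomial_ge_pred_quotient
      by (intro hprob_indep_trace_ge_le_exp) auto
    also have "\<dots> \<le> exp (- (a * ln 2 * L) * real n)"
      using first_moment_exponent_le[OF assms(1,2) \<open>1 < d\<close> ln_d]
      by (intro exp_mono mult_right_mono) (simp_all add: L_def)
    finally show "hprob n r (d / real ((n - 1) choose (r - 1)))
        (\<lambda>G. \<exists>T. indep_set n G T \<and> \<epsilon> * L * real n \<le> real (card (T \<inter> S)))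
      \<le> exp (- (a * ln 2 * L) * real n)" .
  qed
  moreover have "0 < a * ln 2 * L"
    using assms \<open>0 < L\<close> by simp
  ultimately show ?thesis
    unfolding L_def[symmetric] by blast
qed

theorem mainTheorem14:
  fixes \<epsilon> a :: real and r :: nat
  assumes "\<epsilon> > 0" and "r \<ge> 2" and "a > 0"
  shows "\<exists>d0::real. \<forall>d::real. d \<ge> d0 \<longrightarrow>
           (\<exists>c>0. \<exists>N::nat. \<forall>n\<ge>N. \<forall>S::nat set.
              S \<subseteq> {..<n} \<and> real (card S) \<le> a * (ln d / d) powr (1 / (real r - 1)) * real n \<longrightarrow>
              hprob n r (d / real ((n - 1) choose (r - 1)))
                (\<lambda>G. \<exists>T. indep_set n G T \<and>
                   real (card (T \<inter> S)) \<ge> \<epsilon> * (ln d / d) powr (1 / (real r - 1)) * real n)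
              \<le> exp (- c * real n))"
  by (rule exI[of _ "max 2 (exp (2 * a * ln 2 * real r ^ r / \<epsilon> ^ r))"], intro allI impI,
      rule hprob_indep_trace_ge_exponentially_small[OF assms]) (auto simp: ln_ge_iff)

end
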